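(* Let $G$ be a median graph in $\mathcal{U}_3$ with $n\ge 3$ vertices and $v_0$ its unique vertex lying in every majority halfspace. Let $u,v$ be vertices different from $v_0$ with $L_{v_0,u}\ne L_{v_0,v}$ and $L_{v_0,u}\cap L_{v_0,v}\neq\emptyset$, and let $m=m(u,v,v_0)$ be the median of $u,v,v_0$ (the unique vertex of $I(u,v)\cap I(v,v_0)\cap I(v_0,u)$). Then $m\ne v_0$ and $L_{v_0,m}=L_{v_0,u}\cap L_{v_0,v}$.
   Context: Graphs are finite, simple, connected, undirected; $d$ is shortest-path distance; $I(u,v)=\{x:d(u,x)+d(x,v)=d(u,v)\}$; a graph is median if every triple $x,y,z$ has $|I(x,y)\cap I(y,z)\cap I(z,x)|=1$. $\Theta$-classes: classes of the reflexive–transitive closure of the relation on edges "opposite edges of a 4-cycle"; deleting a $\Theta$-class $E_i$ of a median graph leaves two components with vertex sets (halfspaces) $H_i',H_i''$. $\mathcal{U}_3$ is the family of median graphs with $n$ vertices in which every $\Theta$-class satisfies $\min\{|H_i'|,|H_i''|\}<n/3$; the larger halfspace is the majority halfspace. For $u\ne v$, the ladder set $L_{u,v}$ is the set of $\Theta$-classes $E_i$ such that $u,v$ lie in different halfspaces of $E_i$ and $u$ is an endpoint of an edge of $E_i$. *)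

theory Defs
  imports Main
begin

definition graph :: "'a set \<Rightarrow> ('a \<Rightarrow> 'a \<Rightarrow> bool) \<Rightarrow> bool" where
  "graph V E \<longleftrightarrow> finite V \<and> V \<noteq> {} \<and>
     (\<forall>a b. E a b \<longrightarrow> a \<in> V \<and> b \<in> V \<and> a \<noteq> b \<and> E b a) \<and>
     (\<forall>x\<in>V. \<forall>y\<in>V. E\<^sup>*\<^sup>* x y)"

definition gdist :: "('a \<Rightarrow> 'a \<Rightarrow> bool) \<Rightarrow> 'a \<Rightarrow> 'a \<Rightarrow> nat" where
  "gdist E u v = (LEAST k. (E ^^ k) u v)"

definition interval :: "'a set \<Rightarrow> ('a \<Rightarrow> 'a \<Rightarrow> bool) \<Rightarrow> 'a \<Rightarrow> 'a \<Rightarrow> 'a set" where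
  "interval V E u v = {x \<in> V. gdist E u x + gdist E x v = gdist E u v}"

definition median_graph :: "'a set \<Rightarrow> ('a \<Rightarrow> 'a \<Rightarrow> bool) \<Rightarrow> bool" where
  "median_graph V E \<longleftrightarrow> graph V E \<and>
     (\<forall>x\<in>V. \<forall>y\<in>V. \<forall>z\<in>V.
        card (interval V E x y \<inter> interval V E y z \<inter> interval V E z x) = 1)"

definition edges :: "('a \<Rightarrow> 'a \<Rightarrow> bool) \<Rightarrow> 'a set set" where
  "edges E = {{a, b} | a b. E a b}"

definition opposite :: "('a \<Rightarrow> 'a \<Rightarrow> bool) \<Rightarrow> ('a set \<times> 'a set) set" where
  "opposite E = {({a, b}, {c, d}) | a b c d.
      distinct [a, b, c, d] \<and> E a b \<and> E b c \<and> E c d \<and> E d a}"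

definition Theta :: "('a \<Rightarrow> 'a \<Rightarrow> bool) \<Rightarrow> ('a set \<times> 'a set) set" where
  "Theta E = (opposite E)\<^sup>* \<inter> (edges E \<times> edges E)"

definition theta_classes :: "('a \<Rightarrow> 'a \<Rightarrow> bool) \<Rightarrow> 'a set set set" where
  "theta_classes E = edges E // Theta E"

definition del_class :: "('a \<Rightarrow> 'a \<Rightarrow> bool) \<Rightarrow> 'a set set \<Rightarrow> 'a \<Rightarrow> 'a \<Rightarrow> bool" where
  "del_class E F a b \<longleftrightarrow> E a b \<and> {a, b} \<notin> F"

definition halfspace_of :: "'a set \<Rightarrow> ('a \<Rightarrow> 'a \<Rightarrow> bool) \<Rightarrow> 'a set set \<Rightarrow> 'a \<Rightarrow> 'a set" where
  "halfspace_of V E F x = {y \<in> V. (del_class E F)\<^sup>*\<^sup>* x y}"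

definition halfspaces :: "'a set \<Rightarrow> ('a \<Rightarrow> 'a \<Rightarrow> bool) \<Rightarrow> 'a set set \<Rightarrow> 'a set set" where
  "halfspaces V E F = halfspace_of V E F ` V"

definition U3 :: "'a set \<Rightarrow> ('a \<Rightarrow> 'a \<Rightarrow> bool) \<Rightarrow> bool" where
  "U3 V E \<longleftrightarrow> median_graph V E \<and>
     (\<forall>F \<in> theta_classes E. 3 * Min (card ` halfspaces V E F) < card V)"

definition majority_halfspace :: "'a set \<Rightarrow> ('a \<Rightarrow> 'a \<Rightarrow> bool) \<Rightarrow> 'a set set \<Rightarrow> 'a set" where
  "majority_halfspace V E F =
     (THE H. H \<in> halfspaces V E F \<and> (\<forall>H' \<in> halfspaces V E F. H' \<noteq> H \<longrightarrow> card H' < card H))"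

definition ladder :: "'a set \<Rightarrow> ('a \<Rightarrow> 'a \<Rightarrow> bool) \<Rightarrow> 'a \<Rightarrow> 'a \<Rightarrow> 'a set set set" where
  "ladder V E u v = {F \<in> theta_classes E.
      halfspace_of V E F u \<noteq> halfspace_of V E F v \<and> (\<exists>e \<in> F. u \<in> e)}"

end

theory Submission
  imports Defs
begin

text \<open>In a median graph every \<open>\<Theta>\<close>-class is the set of edges between \<open>W a b\<close> and
  \<open>W b a\<close> for any of its edges \<open>ab\<close> (Djokovi\'c), where \<open>W a b\<close> is the set of vertices closer
  to \<open>a\<close> than to \<open>b\<close>; these two sets are the halfspaces of the class, and they are convex.
  Hence the median \<open>m\<close> of \<open>u, v, v0\<close> lies on the side of every class that contains at least
  two of \<open>u, v, v0\<close>, so a class separates \<open>v0\<close> from \<open>m\<close> exactly when it separates \<open>v0\<close>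
  from both \<open>u\<close> and \<open>v\<close>. Whether \<open>v0\<close> is incident to the class does not depend on the
  second vertex, so \<open>L(v0,m) = L(v0,u) \<inter> L(v0,v)\<close>, and as \<open>L(v0,v0)\<close> is empty, \<open>m \<noteq> v0\<close>.\<close>

locale connected_graph =
  fixes V :: "'a set" and E :: "'a \<Rightarrow> 'a \<Rightarrow> bool"
  assumes graph: "graph V E"
begin

abbreviation d :: "'a \<Rightarrow> 'a \<Rightarrow> nat" where "d \<equiv> gdist E"

lemma adj_sym: "E a b \<Longrightarrow> E b a"
  using graph unfolding graph_def by blast

lemma adj_in_V:
  assumes "E a b" shows "a \<in> V" "b \<in> V"
  using assms graph unfolding graph_def by blast+

lemma adj_neq: "E a b \<Longrightarrow> a \<noteq> b"
  using graph unfolding graph_def by blast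

lemma walk_exists: "x \<in> V \<Longrightarrow> y \<in> V \<Longrightarrow> \<exists>k. (E ^^ k) x y"
  using graph unfolding graph_def by (meson rtranclp_imp_relpowp)

lemma dist_walk: "x \<in> V \<Longrightarrow> y \<in> V \<Longrightarrow> (E ^^ d x y) x y"
  unfolding gdist_def using walk_exists by (meson LeastI_ex)

lemma dist_le_walk: "(E ^^ k) x y \<Longrightarrow> d x y \<le> k"
  unfolding gdist_def by (rule Least_le)

lemma dist_self [simp]: "d x x = 0"
  using dist_le_walk[of 0 x x] by simp

lemma dist_eq_0D: "x \<in> V \<Longrightarrow> y \<in> V \<Longrightarrow> d x y = 0 \<Longrightarrow> x = y"
  using dist_walk[of x y] by simp

lemma walk_rev: "(E ^^ k) x y \<Longrightarrow> (E ^^ k) y x"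
proof (induction k arbitrary: y)
  case (Suc k)
  then obtain w where "(E ^^ k) x w" "E w y" by (meson relpowp_Suc_E)
  then show ?case using Suc.IH relpowp_Suc_I2 adj_sym by metis
qed simp

lemma dist_sym: "x \<in> V \<Longrightarrow> y \<in> V \<Longrightarrow> d x y = d y x"
  by (meson antisym dist_le_walk dist_walk walk_rev)

lemma dist_triangle: "x \<in> V \<Longrightarrow> y \<in> V \<Longrightarrow> z \<in> V \<Longrightarrow> d x z \<le> d x y + d y z"
  by (meson dist_le_walk dist_walk relpowp_trans)

lemma dist_adj: "E x y \<Longrightarrow> d x y = 1"
  using dist_le_walk[of 1 x y] dist_eq_0D adj_in_V adj_neq by fastforce

lemma adj_if_dist_1: "x \<in> V \<Longrightarrow> y \<in> V \<Longrightarrow> d x y = 1 \<Longrightarrow> E x y"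
  using dist_walk[of x y] by (metis relpowp_1)

lemma dist_eq_2:
  assumes xy: "E x y" and yz: "E y z" and "x \<noteq> z" "\<not> E x z"
  shows "d x z = 2"
proof -
  have "d x z \<le> 2" using dist_triangle[of x y z] dist_adj xy yz adj_in_V by fastforce
  moreover have "d x z \<noteq> 0" "d x z \<noteq> 1"
    using dist_eq_0D adj_if_dist_1 adj_in_V(1)[OF xy] adj_in_V(2)[OF yz] assms(3,4) by blast+
  ultimately show ?thesis by linarith
qed

lemma dist_SucE:
  assumes x: "x \<in> V" and y: "y \<in> V" and k: "d x y = Suc k"
  obtains w where "E x w" "d w y = k"
proof -
  obtain w where w: "E x w" "(E ^^ k) w y"
    using dist_walk[OF x y] k by (metis relpowp_Suc_E2)
  have "d x y \<le> d x w + d w y" using dist_triangle x y adj_in_V w by blast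
  then have "d w y = k" using dist_le_walk[OF w(2)] dist_adj[OF w(1)] k by linarith
  with w show thesis using that by blast
qed

lemma dist_from_adj_le: "E x y \<Longrightarrow> z \<in> V \<Longrightarrow> d z y \<le> d z x + 1"
  using dist_triangle[of z x y] dist_adj adj_in_V by fastforce

lemma dist_to_adj_le: "E x y \<Longrightarrow> z \<in> V \<Longrightarrow> d y z \<le> d x z + 1"
  using dist_from_adj_le[of x y z] dist_sym adj_in_V by metis

lemma geodesic_exit_edge:
  assumes "y \<in> V" "y \<in> S" "z \<in> V" "z \<notin> S"
  obtains q p where "E q p" "q \<notin> S" "p \<in> S" "d z q + 1 + d p y = d z y"
proof -
  have "\<exists>q p. E q p \<and> q \<notin> S \<and> p \<in> S \<and> d z q + 1 + d p y = d z y"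
    if "d z y = n" "z \<in> V" "z \<notin> S" for n z
    using that
  proof (induction n arbitrary: z)
    case 0
    then show ?case using dist_eq_0D assms(1,2) by blast
  next
    case (Suc n)
    obtain w where zw: "E z w" and wy: "d w y = n"
      using dist_SucE[OF Suc.prems(2) assms(1) Suc.prems(1)] .
    show ?case
    proof (cases "w \<in> S")
      case True
      then show ?thesis using zw wy Suc.prems by (intro exI[of _ z] exI[of _ w]) simp
    next
      case False
      then obtain q p where qp: "E q p" "q \<notin> S" "p \<in> S" and eq: "d w q + 1 + d p y = d w y"
        using Suc.IH[OF wy adj_in_V(2)[OF zw]] by blast
      have "d z q \<le> d z w + d w q"
        using dist_triangle Suc.prems(2) adj_in_V zw qp by blast
      moreover have "d z y \<le> d z q + d q p + d p y"
        using dist_triangle[of z q y] dist_triangle[of q p y] assms(1) Suc.prems(2) adj_in_V qp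
        by fastforce
      ultimately have "d z q + 1 + d p y = d z y"
        using eq wy Suc.prems(1) dist_adj[OF zw] dist_adj[OF qp(1)] by linarith
      then show ?thesis using qp by blast
    qed
  qed
  then show thesis using that assms(3,4) by blast
qed

end

locale median_graph_on =
  fixes V :: "'a set" and E :: "'a \<Rightarrow> 'a \<Rightarrow> bool"
  assumes median_graph: "median_graph V E"

sublocale median_graph_on \<subseteq> connected_graph
  using median_graph unfolding median_graph_def by unfold_locales blast

context median_graph_on
begin

lemma median_unique:
  assumes "x \<in> V" "y \<in> V" "z \<in> V"
  obtains m where "interval V E x y \<inter> interval V E y z \<inter> interval V E z x = {m}"
  using assms median_graph that unfolding median_graph_def by (meson card_1_singletonE)

lemma adj_dist_neq:
  assumes ab: "E a b" and x: "x \<in> V"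
  shows "d x a \<noteq> d x b"
proof
  assume eq: "d x a = d x b"
  have a: "a \<in> V" and b: "b \<in> V" using adj_in_V[OF ab] by auto
  obtain m where "interval V E x a \<inter> interval V E a b \<inter> interval V E b x = {m}"
    using median_unique[OF x a b] .
  then have m: "m \<in> V" "d x m + d m a = d x a" "d a m + d m b = d a b" "d b m + d m x = d b x"
    unfolding interval_def by auto
  have "d a m = 0 \<or> d m b = 0" using m(3) dist_adj[OF ab] by linarith
  then have "m = a \<or> m = b" using m(1) dist_eq_0D a b by metis
  then show False
    using m eq dist_adj[OF ab] dist_sym[OF a b] dist_sym[OF a x] dist_sym[OF b x] by auto
qed

lemma adj_dist_cases:
  assumes "E a b" "x \<in> V"
  shows "d x b = d x a + 1 \<or> d x a = d x b + 1"
  using adj_dist_neq[OF assms] dist_from_adj_le[OF assms]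
    dist_from_adj_le[OF adj_sym[OF assms(1)] assms(2)] by linarith

definition W :: "'a \<Rightarrow> 'a \<Rightarrow> 'a set" where
  "W a b = {x \<in> V. d x a < d x b}"

lemma W_subset: "W a b \<subseteq> V"
  unfolding W_def by auto

lemma W_swap: "E a b \<Longrightarrow> W b a = V - W a b"
  unfolding W_def using adj_dist_neq by fastforce

lemma W_disjoint: "E a b \<Longrightarrow> x \<in> W a b \<Longrightarrow> x \<notin> W b a"
  using W_swap by blast

lemma left_in_W: "E a b \<Longrightarrow> a \<in> W a b"
  unfolding W_def using dist_adj adj_in_V by fastforce

lemma W_geodesic_step:
  assumes ab: "E a b" and y: "y \<in> W a b" and ya: "d y a = Suc n"
  obtains z where "E y z" "z \<in> W a b" "d z a = n"
proof -
  have yV: "y \<in> V" using y W_subset by auto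
  obtain z where yz: "E y z" and za: "d z a = n"
    using dist_SucE[OF yV adj_in_V(1)[OF ab] ya] .
  have zV: "z \<in> V" using adj_in_V(2)[OF yz] .
  have "d y b \<le> d z b + 1" using dist_to_adj_le[OF adj_sym[OF yz] adj_in_V(2)[OF ab]] .
  moreover have "d y b = d y a + 1" using adj_dist_cases[OF ab yV] y unfolding W_def by auto
  ultimately have "z \<in> W a b" using za ya zV unfolding W_def by simp
  with yz za show thesis using that by blast
qed

lemma dist_across_edge:
  assumes ab: "E a b" and pq: "E p q" and p: "p \<in> W a b" and q: "q \<in> W b a"
  shows "d p a = d q b" "d p b = d p a + 1" "d q a = d q b + 1"
proof -
  have V: "p \<in> V" "q \<in> V" using p q W_subset by auto
  show 1: "d p b = d p a + 1" using adj_dist_cases[OF ab V(1)] p unfolding W_def by auto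
  show 2: "d q a = d q b + 1" using adj_dist_cases[OF ab V(2)] q unfolding W_def by auto
  show "d p a = d q b"
    using dist_to_adj_le[OF pq adj_in_V(1)[OF ab]] dist_to_adj_le[OF adj_sym[OF pq] adj_in_V(2)[OF ab]]
      1 2 by linarith
qed


lemma square_dist_less:
  assumes dist: "distinct [a, b, c, e]" and ab: "E a b" and bc: "E b c" and ce: "E c e"
    and ea: "E e a" and x: "x \<in> V" and lt: "d x a < d x b"
  shows "d x e < d x c"
proof (rule ccontr)
  assume "\<not> d x e < d x c"
  have a: "a \<in> V" and b: "b \<in> V" and c: "c \<in> V" and e: "e \<in> V"
    using ab ce adj_in_V by auto
  have xb: "d x b = d x a + 1" using adj_dist_cases[OF ab x] lt by linarith
  have xe: "d x e = d x c + 1" using adj_dist_cases[OF ce x] \<open>\<not> d x e < d x c\<close> by linarith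
  have xc: "d x c = d x a" and xe': "d x e = d x a + 1"
    using dist_from_adj_le[OF adj_sym[OF ea] x] dist_from_adj_le[OF adj_sym[OF bc] x] xb xe
    by linarith+
  have sides: "d a b = 1" "d b a = 1" "d a e = 1" "d e a = 1" "d b c = 1" "d c b = 1" "d c e = 1" "d e c = 1"
    using dist_adj ab bc ce ea adj_sym by auto
  have "d b e \<noteq> 0" using dist_eq_0D[OF b e] dist by auto
  moreover have "d b e \<noteq> 1"
    using adj_if_dist_1[OF b e] adj_dist_neq[OF _ x] xb xe' by metis
  ultimately have dbe: "d b e = 2" using dist_triangle[OF b a e] sides by linarith
  txt \<open>Both \<open>a\<close> and \<open>c\<close> would be medians of \<open>x, b, e\<close>.\<close>
  obtain m where m: "interval V E x b \<inter> interval V E b e \<inter> interval V E e x = {m}"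
    using median_unique[OF x b e] .
  have "a \<in> interval V E x b \<inter> interval V E b e \<inter> interval V E e x"
    unfolding interval_def using a sides xb dbe xe' dist_sym[OF x a] dist_sym[OF x e] by simp
  moreover have "c \<in> interval V E x b \<inter> interval V E b e \<inter> interval V E e x"
    unfolding interval_def using c sides xb xc dbe xe' dist_sym[OF x c] dist_sym[OF x e] by simp
  ultimately show False using m dist by auto
qed

lemma square_W_eq:
  assumes "distinct [a, b, c, e]" "E a b" "E b c" "E c e" "E e a"
  shows "W a b = W e c"
proof -
  have "distinct [e, c, b, a]" using assms(1) by auto
  then show ?thesis
    unfolding W_def using square_dist_less[OF assms] square_dist_less[OF _ adj_sym adj_sym adj_sym adj_sym]
    using assms by blast
qed

lemma crossing_edge_square:
  assumes ab: "E a b" and pq: "E p q" and p: "p \<in> W a b" and q: "q \<in> W b a"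
    and pa: "d p a = Suc k"
  obtains p' y where "E q y" "E y p'" "E p' p" "distinct [p, q, y, p']"
    "p' \<in> W a b" "y \<in> W b a" "d p' a = k"
proof -
  have V: "p \<in> V" "q \<in> V" "a \<in> V" "b \<in> V" using pq ab adj_in_V by auto
  note across = dist_across_edge[OF ab pq p q]
  obtain p' where pp': "E p p'" and p'W: "p' \<in> W a b" and p'a: "d p' a = k"
    using W_geodesic_step[OF ab p pa] .
  have p'V: "p' \<in> V" using adj_in_V(2)[OF pp'] .
  have p'b: "d p' b = k + 1" using dist_across_edge(2)[OF ab _ p'W] adj_dist_cases[OF ab p'V] p'W p'a
    unfolding W_def by auto
  have qb: "d q b = Suc k" and qa: "d q a = k + 2" using across pa by auto
  have "q \<noteq> p'" using qa p'a by auto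
  moreover have "\<not> E q p'" using dist_to_adj_le[OF adj_sym V(3)] qa p'a by fastforce
  ultimately have qp': "d q p' = 2" using dist_eq_2[OF adj_sym[OF pq] pp'] by blast
  txt \<open>The fourth corner of the square is the median of \<open>q, p', b\<close>.\<close>
  obtain y where "interval V E q p' \<inter> interval V E p' b \<inter> interval V E b q = {y}"
    using median_unique[OF V(2) p'V V(4)] .
  then have y: "y \<in> V" "d q y + d y p' = d q p'" "d p' y + d y b = d p' b" "d b y + d y q = d b q"
    unfolding interval_def by auto
  have "d q y \<noteq> 0"
    using dist_eq_0D[OF V(2) y(1)] y qp' p'b qb dist_sym[OF V(2) p'V] by force
  moreover have "d y p' \<noteq> 0"
    using dist_eq_0D[OF y(1) p'V] y qp' p'b qb dist_sym[OF V(2) V(4)] dist_sym[OF p'V V(4)]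
      dist_sym[OF V(2) p'V] by force
  ultimately have "d q y = 1" "d y p' = 1" using y(2) qp' by linarith+
  then have qy: "E q y" and yp': "E y p'" using adj_if_dist_1 V(2) p'V y(1) by blast+
  have yb: "d y b = k" using y(3) dist_sym[OF p'V y(1)] \<open>d y p' = 1\<close> p'b by linarith
  have "d y a \<ge> k + 1" using dist_to_adj_le[OF adj_sym[OF qy] V(3)] qa by linarith
  then have yW: "y \<in> W b a" unfolding W_def using y(1) yb by simp
  have "distinct [p, q, y, p']"
    using yb across pa qa p'a adj_neq pq qy yp' pp' by auto
  then show thesis using that qy yp' adj_sym[OF pp'] p'W yW p'a by blast
qed

text \<open>Djokovi\'c's lemma, proved by sliding \<open>pq\<close> along a geodesic towards \<open>ab\<close> through
  squares.\<close>

lemma crossing_edge_W: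
  assumes ab: "E a b" and pq: "E p q" and p: "p \<in> W a b" and q: "q \<in> W b a"
  shows "W p q = W a b" "({a, b}, {p, q}) \<in> (opposite E)\<^sup>*"
proof -
  have "W p q = W a b \<and> ({a, b}, {p, q}) \<in> (opposite E)\<^sup>*"
    if "d p a = k" "E p q" "p \<in> W a b" "q \<in> W b a" for k p q
    using that
  proof (induction k arbitrary: p q)
    case 0
    then have "p = a" using dist_eq_0D adj_in_V ab by blast
    moreover have "q = b" using dist_across_edge(1)[OF ab 0(2-4)] 0(1) dist_eq_0D adj_in_V ab 0(2)
      by metis
    ultimately show ?case by simp
  next
    case (Suc k)
    obtain p' y where sq: "E q y" "E y p'" "E p' p" "distinct [p, q, y, p']"
      and p'y: "p' \<in> W a b" "y \<in> W b a" "d p' a = k"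
      using crossing_edge_square[OF ab Suc.prems(2-4,1)] .
    have IH: "W p' y = W a b" "({a, b}, {p', y}) \<in> (opposite E)\<^sup>*"
      using Suc.IH[OF p'y(3) adj_sym[OF sq(2)] p'y(1,2)] by auto
    have "({y, p'}, {p, q}) \<in> opposite E"
      unfolding opposite_def using sq Suc.prems(2) by fastforce
    then have "({p', y}, {p, q}) \<in> opposite E" by (simp add: insert_commute)
    then have "({a, b}, {p, q}) \<in> (opposite E)\<^sup>*" by (rule rtrancl_into_rtrancl[OF IH(2)])
    moreover have "W p q = W p' y" using square_W_eq[OF sq(4) Suc.prems(2) sq(1-3)] .
    ultimately show ?case using IH(1) by simp
  qed
  then show "W p q = W a b" "({a, b}, {p, q}) \<in> (opposite E)\<^sup>*" using assms by blast+
qed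


definition cut :: "'a \<Rightarrow> 'a \<Rightarrow> 'a set set" where
  "cut a b = {{p, q} | p q. E p q \<and> p \<in> W a b \<and> q \<in> W b a}"

lemma cut_sym: "cut b a = cut a b"
  unfolding cut_def by (auto simp: insert_commute intro: adj_sym)

lemma adj_in_cut_iff:
  assumes ab: "E a b" and pq: "E p q"
  shows "{p, q} \<in> cut a b \<longleftrightarrow> W p q = W a b \<or> W q p = W a b"
proof
  assume "{p, q} \<in> cut a b"
  then obtain p' q' where "{p, q} = {p', q'}" "E p' q'" "p' \<in> W a b" "q' \<in> W b a"
    unfolding cut_def by blast
  then show "W p q = W a b \<or> W q p = W a b"
    using crossing_edge_W(1)[OF ab] by (auto simp: doubleton_eq_iff)
next
  have "{p, q} \<in> cut a b" if "E p q" "W p q = W a b" for p q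
    using that left_in_W[OF adj_sym[OF that(1)]] W_swap[OF that(1)] W_swap[OF ab] left_in_W
    unfolding cut_def by blast
  then show "W p q = W a b \<or> W q p = W a b \<Longrightarrow> {p, q} \<in> cut a b"
    using pq adj_sym by (metis insert_commute)
qed

lemma cut_opposite_closed:
  assumes ab: "E a b" and e: "e \<in> cut a b" and o: "(e, e') \<in> opposite E"
  shows "e' \<in> cut a b"
proof -
  obtain a1 b1 c1 d1 where e: "e = {a1, b1}" and e': "e' = {c1, d1}"
    and sq: "distinct [a1, b1, c1, d1]" "E a1 b1" "E b1 c1" "E c1 d1" "E d1 a1"
    using o unfolding opposite_def by auto
  have "W a1 b1 = W d1 c1" using square_W_eq[OF sq] .
  moreover have "W b1 a1 = W c1 d1"
    using square_W_eq[of b1 a1 d1 c1] sq adj_sym by auto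
  moreover have "W a1 b1 = W a b \<or> W b1 a1 = W a b"
    using adj_in_cut_iff[OF ab sq(2)] \<open>e \<in> cut a b\<close> e by blast
  ultimately show ?thesis
    using adj_in_cut_iff[OF ab adj_sym[OF sq(4)]] e' by (auto simp: insert_commute)
qed

lemma theta_class_eq_cut:
  assumes "F \<in> theta_classes E"
  obtains a b where "E a b" "F = cut a b"
proof -
  obtain e0 where "e0 \<in> edges E" and F: "F = Theta E `` {e0}"
    using assms unfolding theta_classes_def by (auto elim: quotientE)
  then obtain a b where ab: "E a b" and e0: "e0 = {a, b}" unfolding edges_def by auto
  have "e \<in> cut a b" if "({a, b}, e) \<in> (opposite E)\<^sup>*" for e
    using that
  proof (induction rule: rtrancl_induct)
    case base
    show ?case using adj_in_cut_iff[OF ab ab] by simp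
  next
    case (step e e')
    then show ?case using cut_opposite_closed[OF ab] by blast
  qed
  moreover have "e \<in> Theta E `` {e0}" if "e \<in> cut a b" for e
  proof -
    obtain p q where "e = {p, q}" "E p q" "p \<in> W a b" "q \<in> W b a"
      using \<open>e \<in> cut a b\<close> unfolding cut_def by blast
    then show ?thesis
      using crossing_edge_W(2)[OF ab] ab e0 unfolding Theta_def edges_def by blast
  qed
  ultimately have "F = cut a b" using F e0 unfolding Theta_def by blast
  then show thesis using that ab by blast
qed

lemma del_cut_rtranclp_W:
  assumes ab: "E a b" and r: "(del_class E (cut a b))\<^sup>*\<^sup>* x y"
  shows "x \<in> W a b \<longleftrightarrow> y \<in> W a b"
  using r
proof (induction rule: rtranclp_induct)
  case (step y z)
  then have "E y z" "{y, z} \<notin> cut a b" unfolding del_class_def by auto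
  then have "y \<in> W a b \<longleftrightarrow> z \<in> W a b"
    using W_swap[OF ab] adj_in_V unfolding cut_def by (blast intro: insert_commute adj_sym)
  with step.IH show ?case by simp
qed simp

lemma W_del_cut_connected:
  assumes ab: "E a b" and y: "y \<in> W a b"
  shows "(del_class E (cut a b))\<^sup>*\<^sup>* y a"
proof -
  have "(del_class E (cut a b))\<^sup>*\<^sup>* y a" if "d y a = n" "y \<in> W a b" for n y
    using that
  proof (induction n arbitrary: y)
    case 0
    then show ?case using dist_eq_0D W_subset adj_in_V(1)[OF ab] by blast
  next
    case (Suc n)
    obtain z where yz: "E y z" and z: "z \<in> W a b" "d z a = n"
      using W_geodesic_step[OF ab Suc.prems(2,1)] .
    have "{y, z} \<notin> cut a b"
      using Suc.prems(2) z(1) W_disjoint[OF ab] unfolding cut_def by (auto simp: doubleton_eq_iff)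
    then have "del_class E (cut a b) y z" unfolding del_class_def using yz by blast
    then show ?case using Suc.IH[OF z(2,1)] by (rule converse_rtranclp_into_rtranclp)
  qed
  then show ?thesis using y by blast
qed

lemma halfspace_of_cut:
  assumes ab: "E a b" and x: "x \<in> W a b"
  shows "halfspace_of V E (cut a b) x = W a b"
proof -
  have "symp (del_class E (cut a b))"
    unfolding del_class_def by (auto intro!: sympI adj_sym simp: insert_commute)
  then have "(del_class E (cut a b))\<^sup>*\<^sup>* x y \<longleftrightarrow> y \<in> W a b" if "y \<in> V" for y
    using W_del_cut_connected[OF ab] del_cut_rtranclp_W[OF ab] x
    by (meson rtranclp_trans symp_rtranclp sympD)
  then show ?thesis unfolding halfspace_of_def using W_subset by blast
qed

lemma halfspace_of_cut_eq_iff: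
  assumes ab: "E a b" and x: "x \<in> V" and y: "y \<in> V"
  shows "halfspace_of V E (cut a b) x = halfspace_of V E (cut a b) y \<longleftrightarrow>
    (x \<in> W a b \<longleftrightarrow> y \<in> W a b)"
proof -
  have "halfspace_of V E (cut a b) z = (if z \<in> W a b then W a b else W b a)" if "z \<in> V" for z
    using halfspace_of_cut[OF ab] halfspace_of_cut[OF adj_sym[OF ab]] W_swap[OF ab] cut_sym that
    by auto
  moreover have "W a b \<noteq> W b a" using left_in_W[OF ab] W_disjoint[OF ab] by blast
  ultimately show ?thesis using x y by auto
qed

lemma W_convex:
  assumes ab: "E a b" and x: "x \<in> W a b" and y: "y \<in> W a b" and z: "z \<in> interval V E x y"
  shows "z \<in> W a b"
proof (rule ccontr)
  assume "z \<notin> W a b"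
  have V: "x \<in> V" "y \<in> V" "z \<in> V" using x y z W_subset unfolding interval_def by auto
  txt \<open>A geodesic from \<open>z\<close> to \<open>y\<close> enters \<open>W a b\<close> through an edge \<open>qp\<close> of the cut, and
    \<open>W p q = W a b\<close> makes it one step too long for \<open>z\<close> to lie on a geodesic from \<open>x\<close>.\<close>
  obtain q p where qp: "E q p" "q \<notin> W a b" "p \<in> W a b" and eq: "d z q + 1 + d p y = d z y"
    using geodesic_exit_edge[OF V(2) y V(3) \<open>z \<notin> W a b\<close>] .
  have "q \<in> W b a" using W_swap[OF ab] qp adj_in_V by blast
  then have "W p q = W a b" using crossing_edge_W(1)[OF ab adj_sym[OF qp(1)] qp(3)] by blast
  then have "d x p < d x q" using x unfolding W_def by auto
  moreover have "d x y \<le> d x p + d p y" using dist_triangle V adj_in_V qp(1) by blast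
  moreover have "d x q \<le> d x z + d z q" using dist_triangle V adj_in_V qp(1) by blast
  ultimately show False using z eq unfolding interval_def by simp
qed

lemma W_median_side:
  assumes ab: "E a b" and x: "x \<in> V" and y: "y \<in> V" and z: "z \<in> interval V E x y"
    and "x \<in> W a b \<longleftrightarrow> y \<in> W a b"
  shows "z \<in> W a b \<longleftrightarrow> x \<in> W a b"
proof (cases "x \<in> W a b")
  case True
  then show ?thesis using W_convex[OF ab _ _ z] assms(5) by blast
next
  case False
  then have "x \<in> W b a" "y \<in> W b a" using assms(5) W_swap[OF ab] x y by blast+
  then have "z \<in> W b a" using W_convex[OF adj_sym[OF ab] _ _ z] by blast
  then show ?thesis using False W_disjoint[OF adj_sym[OF ab]] by blast
qed


lemma theta_class_separates_median:
  assumes F: "F \<in> theta_classes E" and V: "x \<in> V" "y \<in> V" "z \<in> V"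
    and m: "m \<in> interval V E x y \<inter> interval V E y z \<inter> interval V E z x"
  shows "halfspace_of V E F z \<noteq> halfspace_of V E F m \<longleftrightarrow>
    halfspace_of V E F z \<noteq> halfspace_of V E F x \<and> halfspace_of V E F z \<noteq> halfspace_of V E F y"
proof -
  obtain a b where ab: "E a b" and F_eq: "F = cut a b" using theta_class_eq_cut[OF F] .
  have "m \<in> V" and I: "m \<in> interval V E x y" "m \<in> interval V E y z" "m \<in> interval V E z x"
    using m unfolding interval_def by auto
  have "x \<in> W a b \<longleftrightarrow> y \<in> W a b \<Longrightarrow> m \<in> W a b \<longleftrightarrow> x \<in> W a b"
    "y \<in> W a b \<longleftrightarrow> z \<in> W a b \<Longrightarrow> m \<in> W a b \<longleftrightarrow> y \<in> W a b"
    "z \<in> W a b \<longleftrightarrow> x \<in> W a b \<Longrightarrow> m \<in> W a b \<longleftrightarrow> z \<in> W a b"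
    using W_median_side[OF ab] V I by blast+
  then show ?thesis
    unfolding F_eq halfspace_of_cut_eq_iff[OF ab V(3) \<open>m \<in> V\<close>]
      halfspace_of_cut_eq_iff[OF ab V(3) V(1)] halfspace_of_cut_eq_iff[OF ab V(3) V(2)]
    by blast
qed

lemma ladder_median:
  assumes V: "x \<in> V" "y \<in> V" "z \<in> V"
    and m: "m \<in> interval V E x y \<inter> interval V E y z \<inter> interval V E z x"
  shows "ladder V E z m = ladder V E z x \<inter> ladder V E z y"
  unfolding ladder_def using theta_class_separates_median[OF _ V m] by blast

end

theorem mainTheorem13:
  fixes V :: "'a set" and E :: "'a \<Rightarrow> 'a \<Rightarrow> bool" and v0 u v m :: 'a
  assumes "U3 V E"
    and "card V \<ge> 3"
    and "v0 \<in> V"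
    and "\<forall>F \<in> theta_classes E. v0 \<in> majority_halfspace V E F"
    and "u \<in> V" and "v \<in> V" and "u \<noteq> v0" and "v \<noteq> v0"
    and "ladder V E v0 u \<noteq> ladder V E v0 v"
    and "ladder V E v0 u \<inter> ladder V E v0 v \<noteq> {}"
    and "m \<in> interval V E u v \<inter> interval V E v v0 \<inter> interval V E v0 u"
  shows "m \<noteq> v0 \<and> ladder V E v0 m = ladder V E v0 u \<inter> ladder V E v0 v"
proof -
  interpret median_graph_on V E
    using \<open>U3 V E\<close> unfolding U3_def by unfold_locales blast
  have L: "ladder V E v0 m = ladder V E v0 u \<inter> ladder V E v0 v"
    using ladder_median[OF \<open>u \<in> V\<close> \<open>v \<in> V\<close> \<open>v0 \<in> V\<close> assms(11)] .
  moreover have "ladder V E v0 v0 = {}" unfolding ladder_def by blast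
  ultimately show ?thesis using assms(10) by auto
qed

end
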